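(* Let $B_1,B_2>0$, $\mathcal{W}=\{\mathbf{w}\in\mathbb{R}^d\colon\|\mathbf{w}\|<B_1\}$ and $\mathcal{X}=\{\mathbf{x}\in\mathbb{R}^d\colon\|\mathbf{x}\|\le B_2\}$, and let $\rho\in[0,1]$. Consider the function classes (dropout outputs of a network with no hidden layer) \[ \mathcal{F}^{(I)}_\mathcal{W}=\{(\mathbf{x},\mathbf{r})\mapsto\langle\mathbf{w},\mathbf{x}\odot\mathbf{r}\rangle\colon\mathbf{w}\in\mathcal{W}\},\quad \mathcal{F}^{(II)}_\mathcal{W}=\{(\mathbf{x},\mathbf{r})\mapsto\langle\mathbf{w}\odot\mathbf{r},\mathbf{x}\rangle\colon\mathbf{w}\in\mathcal{W}\}, \] \[ \mathcal{F}^{(III)}_\mathcal{W}=\{(\mathbf{x},(\mathbf{r}_1,\mathbf{r}_2))\mapsto\langle\mathbf{w}\odot\mathbf{r}_1,\mathbf{x}\odot\mathbf{r}_2\rangle\colon\mathbf{w}\in\mathcal{W}\}, \] where $\mathbf{r},\mathbf{r}_1,\mathbf{r}_2\in\{0,1\}^d$ have i.i.d. Bern$(\rho)$ entries. Then \[ \mathfrak{R}_n(\mathcal{F}^{(I)}_\mathcal{W})=\mathfrak{R}_n(\mathcal{F}^{(II)}_\mathcal{W})\le B_1B_2\sqrt{\rho/n}\quad\text{and}\quad\mathfrak{R}_n(\mathcal{F}^{(III)}_\mathcal{W})\le B_1B_2\rho/\sqrt{n}. \]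
   Context: $\|\cdot\|$ is the Euclidean norm and $\odot$ the entrywise product. Inputs $\mathbf{x}_1,\dots,\mathbf{x}_n$ are drawn i.i.d. from a distribution on $\mathcal{X}$ (the $\mathcal{X}$-marginal of a distribution on $\mathcal{X}\times\mathcal{Y}$), and dropout variables $\mathbf{r}_1,\dots,\mathbf{r}_n$ (each a vector, or pair of vectors, as appropriate to the class) are drawn i.i.d. independently of the inputs with all entries i.i.d. Bern$(\rho)$. For a class $\mathcal{H}$ of functions $h(\mathbf{x},\mathbf{r})$, $\hat{\mathfrak{R}}_n(\mathcal{H},S_n,RS_n)=E_\epsilon[\sup_{h\in\mathcal{H}}\frac1n\sum_{i=1}^n\epsilon_i h(\mathbf{x}_i,\mathbf{r}_i)]$ with $\epsilon_i$ i.i.d. uniform on $\{\pm1\}$, and $\mathfrak{R}_n(\mathcal{H})=E_{S_n,RS_n}[\hat{\mathfrak{R}}_n(\mathcal{H},S_n,RS_n)]$. *)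

theory Defs
  imports "HOL-Analysis.Analysis" "HOL-Probability.Probability"
begin

text \<open>Entrywise product of a vector with a 0/1 dropout mask (mask encoded as 'd => bool,
  True meaning 1).\<close>
definition dmask :: "real ^ 'd \<Rightarrow> ('d \<Rightarrow> bool) \<Rightarrow> real ^ 'd" where
  "dmask x r = (\<chi> i. x $ i * of_bool (r i))"

definition dropout_pmf :: "real \<Rightarrow> ('d::finite \<Rightarrow> bool) pmf" where
  "dropout_pmf \<rho> = Pi_pmf UNIV False (\<lambda>_. bernoulli_pmf \<rho>)"

definition emp_rademacher ::
  "nat \<Rightarrow> ('x \<Rightarrow> 'r \<Rightarrow> real) set \<Rightarrow> (nat \<Rightarrow> 'x) \<Rightarrow> (nat \<Rightarrow> 'r) \<Rightarrow> real" where
  "emp_rademacher n H xs rs =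
     (\<Sum>\<epsilon>\<in>PiE {..<n} (\<lambda>_. {-1, 1::real}).
        (SUP h\<in>H. (1 / real n) * (\<Sum>i<n. \<epsilon> i * h (xs i) (rs i)))) / 2 ^ n"

definition rademacher ::
  "nat \<Rightarrow> 'x measure \<Rightarrow> 'r measure \<Rightarrow> ('x \<Rightarrow> 'r \<Rightarrow> real) set \<Rightarrow> real" where
  "rademacher n D R H =
     (\<integral>p. emp_rademacher n H (fst p) (snd p)
        \<partial>(PiM {..<n} (\<lambda>_. D) \<Otimes>\<^sub>M PiM {..<n} (\<lambda>_. R)))"

definition classI :: "real \<Rightarrow> (real ^ 'd \<Rightarrow> ('d \<Rightarrow> bool) \<Rightarrow> real) set" where
  "classI B1 = {(\<lambda>x r. w \<bullet> dmask x r) | w. norm w < B1}"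

definition classII :: "real \<Rightarrow> (real ^ 'd \<Rightarrow> ('d \<Rightarrow> bool) \<Rightarrow> real) set" where
  "classII B1 = {(\<lambda>x r. dmask w r \<bullet> x) | w. norm w < B1}"

definition classIII ::
  "real \<Rightarrow> (real ^ 'd \<Rightarrow> ('d \<Rightarrow> bool) \<times> ('d \<Rightarrow> bool) \<Rightarrow> real) set" where
  "classIII B1 = {(\<lambda>x r. dmask w (fst r) \<bullet> dmask x (snd r)) | w. norm w < B1}"

end

theory Submission
  imports Defs
begin

(* Moving the dropout masks onto the input turns all three classes into norm-bounded linear
   classes over the masked feature x o m(r), where m(r) = r for classes I and II and
   m(r1, r2) = r1 & r2 for class III, whose coordinates survive with probability rho^2.
   For a fixed sign vector the supremum over the ball is at most B1 |sum_i eps_i x_i o m(r_i)| / n,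
   and since distinct Rademacher signs are orthogonal, its mean over the signs is at most
   B1 / n * sqrt (sum_i |x_i o m(r_i)|^2). Jensen's inequality for the square root then bounds
   the Rademacher complexity by B1 / n * sqrt (n p B2^2), where p bounds the survival
   probability of a single coordinate. *)

abbreviation rademacher_signs :: "nat \<Rightarrow> (nat \<Rightarrow> real) set" where
  "rademacher_signs n \<equiv> PiE {..<n} (\<lambda>_. {-1, 1})"

lemma card_rademacher_signs: "card (rademacher_signs n) = 2 ^ n"
  by (simp add: card_PiE numeral_2_eq_2)

lemma sum_rademacher_signs_mult:
  assumes "i < n" "k < n"
  shows "(\<Sum>\<epsilon>\<in>rademacher_signs n. \<epsilon> i * \<epsilon> k) = (if i = k then 2 ^ n else 0)"
proof (cases "i = k")
  case True
  have "\<epsilon> i * \<epsilon> i = 1" if "\<epsilon> \<in> rademacher_signs n" for \<epsilon>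
  proof -
    have "\<epsilon> i = -1 \<or> \<epsilon> i = 1" using that assms by (auto simp: PiE_iff)
    then show ?thesis by auto
  qed
  then show ?thesis using True by (simp add: card_rademacher_signs)
next
  case False
  \<comment> \<open>flipping the sign of coordinate i is an involution of the sign vectors that negates each summand\<close>
  define flip where "flip = (\<lambda>\<epsilon>::nat \<Rightarrow> real. \<epsilon>(i := - \<epsilon> i))"
  have "flip \<epsilon> \<in> rademacher_signs n" if "\<epsilon> \<in> rademacher_signs n" for \<epsilon>
    using that assms by (auto simp: flip_def PiE_iff extensional_def)
  then have "bij_betw flip (rademacher_signs n) (rademacher_signs n)"
    by (intro bij_betw_byWitness[where f' = flip]) (auto simp: flip_def)
  then have "(\<Sum>\<epsilon>\<in>rademacher_signs n. \<epsilon> i * \<epsilon> k) = (\<Sum>\<epsilon>\<in>rademacher_signs n. flip \<epsilon> i * flip \<epsilon> k)"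
    by (rule sum.reindex_bij_betw[symmetric])
  also have "\<dots> = - (\<Sum>\<epsilon>\<in>rademacher_signs n. \<epsilon> i * \<epsilon> k)"
    using False by (simp add: flip_def flip: sum_negf)
  finally show ?thesis using False by simp
qed

lemma sum_rademacher_signs_norm_sq:
  fixes u :: "nat \<Rightarrow> 'a::real_inner"
  shows "(\<Sum>\<epsilon>\<in>rademacher_signs n. (norm (\<Sum>i<n. \<epsilon> i *\<^sub>R u i))\<^sup>2) = 2 ^ n * (\<Sum>i<n. (norm (u i))\<^sup>2)"
proof -
  have "(\<Sum>\<epsilon>\<in>rademacher_signs n. (norm (\<Sum>i<n. \<epsilon> i *\<^sub>R u i))\<^sup>2)
      = (\<Sum>i<n. \<Sum>k<n. (u k \<bullet> u i) * (\<Sum>\<epsilon>\<in>rademacher_signs n. \<epsilon> i * \<epsilon> k))"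
    by (simp add: power2_norm_eq_inner inner_sum_left inner_sum_right sum_distrib_left
        sum.swap[of _ "rademacher_signs n"] mult_ac)
  also have "\<dots> = (\<Sum>i<n. 2 ^ n * (u i \<bullet> u i))"
  proof (rule sum.cong[OF refl])
    fix i assume i: "i \<in> {..<n}"
    have "(\<Sum>k<n. (u k \<bullet> u i) * (\<Sum>\<epsilon>\<in>rademacher_signs n. \<epsilon> i * \<epsilon> k))
        = (\<Sum>k<n. if k = i then 2 ^ n * (u i \<bullet> u i) else 0)"
      using i by (intro sum.cong) (auto simp: sum_rademacher_signs_mult)
    then show "(\<Sum>k<n. (u k \<bullet> u i) * (\<Sum>\<epsilon>\<in>rademacher_signs n. \<epsilon> i * \<epsilon> k)) = 2 ^ n * (u i \<bullet> u i)"
      using i by simp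
  qed
  finally show ?thesis
    by (simp add: power2_norm_eq_inner sum_distrib_left)
qed

lemma sum_rademacher_signs_norm_le:
  fixes u :: "nat \<Rightarrow> 'a::real_inner"
  shows "(\<Sum>\<epsilon>\<in>rademacher_signs n. norm (\<Sum>i<n. \<epsilon> i *\<^sub>R u i)) \<le> 2 ^ n * sqrt (\<Sum>i<n. (norm (u i))\<^sup>2)"
proof -
  have "(\<Sum>\<epsilon>\<in>rademacher_signs n. norm (\<Sum>i<n. \<epsilon> i *\<^sub>R u i))\<^sup>2
      \<le> (\<Sum>\<epsilon>\<in>rademacher_signs n. (norm (\<Sum>i<n. \<epsilon> i *\<^sub>R u i))\<^sup>2) * card (rademacher_signs n)"
    by (rule sum_squared_le_sum_of_squares)
  also have "\<dots> = (2 ^ n)\<^sup>2 * (\<Sum>i<n. (norm (u i))\<^sup>2)"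
    by (simp only: sum_rademacher_signs_norm_sq card_rademacher_signs) (simp add: power2_eq_square)
  also have "\<dots> = (2 ^ n * sqrt (\<Sum>i<n. (norm (u i))\<^sup>2))\<^sup>2"
    by (simp add: power_mult_distrib sum_nonneg)
  finally show ?thesis
    by (rule power2_le_imp_le) (simp add: sum_nonneg)
qed

definition linear_class :: "real \<Rightarrow> ('x \<Rightarrow> 'r \<Rightarrow> 'a::real_inner) \<Rightarrow> ('x \<Rightarrow> 'r \<Rightarrow> real) set" where
  "linear_class B \<phi> = {(\<lambda>x r. w \<bullet> \<phi> x r) | w. norm w < B}"

lemma SUP_linear_class_le:
  fixes \<phi> :: "'x \<Rightarrow> 'r \<Rightarrow> 'a::real_inner" and \<epsilon> :: "nat \<Rightarrow> real" and n :: nat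
    and xs :: "nat \<Rightarrow> 'x" and rs :: "nat \<Rightarrow> 'r"
  assumes "B > 0"
  defines "v \<equiv> (\<Sum>i<n. \<epsilon> i *\<^sub>R \<phi> (xs i) (rs i))"
  shows "(SUP h\<in>linear_class B \<phi>. 1 / real n * (\<Sum>i<n. \<epsilon> i * h (xs i) (rs i))) \<le> B / n * norm v"
    and "0 \<le> (SUP h\<in>linear_class B \<phi>. 1 / real n * (\<Sum>i<n. \<epsilon> i * h (xs i) (rs i)))"
proof -
  have image: "(\<lambda>h. 1 / real n * (\<Sum>i<n. \<epsilon> i * h (xs i) (rs i))) ` linear_class B \<phi>
      = (\<lambda>w. 1 / real n * (w \<bullet> v)) ` {w. norm w < B}"
    unfolding linear_class_def v_def by (auto simp: inner_sum_right)
  have le: "1 / real n * (w \<bullet> v) \<le> B / n * norm v" if "norm w < B" for w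
  proof -
    have "w \<bullet> v \<le> B * norm v"
      using norm_cauchy_schwarz[of w v] that by (meson less_imp_le mult_right_mono norm_ge_zero order_trans)
    then show ?thesis by (simp add: divide_right_mono)
  qed
  have ball: "0 \<in> {w :: 'a. norm w < B}" using assms by simp
  then have ball_ne: "{w :: 'a. norm w < B} \<noteq> {}" by blast
  show "(SUP h\<in>linear_class B \<phi>. 1 / real n * (\<Sum>i<n. \<epsilon> i * h (xs i) (rs i))) \<le> B / n * norm v"
    unfolding image by (rule cSUP_least[OF ball_ne]) (use le in auto)
  have "1 / real n * (0 \<bullet> v) \<le> (SUP w\<in>{w. norm w < B}. 1 / real n * (w \<bullet> v))"
    by (rule cSUP_upper[OF ball]) (use le in \<open>auto intro!: bdd_aboveI2\<close>)
  then show "0 \<le> (SUP h\<in>linear_class B \<phi>. 1 / real n * (\<Sum>i<n. \<epsilon> i * h (xs i) (rs i)))"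
    unfolding image by simp
qed

lemma emp_rademacher_linear_class_le:
  assumes "B > 0"
  shows "emp_rademacher n (linear_class B \<phi>) xs rs \<le> B / n * sqrt (\<Sum>i<n. (norm (\<phi> (xs i) (rs i)))\<^sup>2)"
proof -
  have "(\<Sum>\<epsilon>\<in>rademacher_signs n. SUP h\<in>linear_class B \<phi>. 1 / real n * (\<Sum>i<n. \<epsilon> i * h (xs i) (rs i)))
      \<le> (\<Sum>\<epsilon>\<in>rademacher_signs n. B / n * norm (\<Sum>i<n. \<epsilon> i *\<^sub>R \<phi> (xs i) (rs i)))"
    by (intro sum_mono SUP_linear_class_le(1) assms)
  also have "\<dots> \<le> B / n * (2 ^ n * sqrt (\<Sum>i<n. (norm (\<phi> (xs i) (rs i)))\<^sup>2))"
    unfolding sum_distrib_left[symmetric]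
    by (intro mult_left_mono sum_rademacher_signs_norm_le) (use assms in simp)
  finally show ?thesis
    unfolding emp_rademacher_def by (simp add: divide_le_eq mult_ac)
qed

lemma emp_rademacher_linear_class_nonneg:
  assumes "B > 0"
  shows "0 \<le> emp_rademacher n (linear_class B \<phi>) xs rs"
  unfolding emp_rademacher_def by (intro divide_nonneg_pos sum_nonneg SUP_linear_class_le(2) assms) auto

lemma nn_integral_PiM_component:
  assumes "\<And>i. i \<in> I \<Longrightarrow> prob_space (M i)" "i \<in> I" "g \<in> borel_measurable (M i)"
  shows "(\<integral>\<^sup>+\<omega>. g (\<omega> i) \<partial>PiM I M) = (\<integral>\<^sup>+x. g x \<partial>M i)"
proof -
  have "(\<integral>\<^sup>+x. g x \<partial>M i) = (\<integral>\<^sup>+x. g x \<partial>distr (PiM I M) (M i) (\<lambda>\<omega>. \<omega> i))"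
    using distr_PiM_component[of I M i] assms by simp
  also have "\<dots> = (\<integral>\<^sup>+\<omega>. g (\<omega> i) \<partial>PiM I M)"
    using assms by (intro nn_integral_distr) auto
  finally show ?thesis ..
qed

lemma ennreal_le_sqrt_of_power2_le:
  assumes "X ^ 2 \<le> ennreal K" "0 \<le> K"
  shows "X \<le> ennreal (sqrt K)"
proof (cases X rule: ennreal_cases)
  case (real r)
  then have "r ^ 2 \<le> K"
    using assms by (simp add: ennreal_power)
  then show ?thesis using real by (simp add: ennreal_leI real_le_rsqrt)
qed (use assms in \<open>simp add: top_unique\<close>)

lemma integral_le_sqrt_of_nn_integral_le:
  assumes "prob_space M" and [measurable]: "f \<in> borel_measurable M"
    and "(\<integral>\<^sup>+x. ennreal (f x) \<partial>M) \<le> ennreal K" "0 \<le> K" "0 \<le> a"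
    and "\<And>x. 0 \<le> g x" "\<And>x. g x \<le> a * sqrt (f x)"
  shows "integral\<^sup>L M g \<le> a * sqrt K"
proof (cases "integrable M g")
  case False
  then show ?thesis using assms by (simp add: not_integrable_integral_eq)
next
  case True
  interpret prob_space M by (rule assms(1))
  have sq: "ennreal (sqrt y) ^ 2 = ennreal y" for y
    by (cases "y \<ge> 0") (auto simp: ennreal_power ennreal_neg)
  \<comment> \<open>Jensen for the concave square root, as Cauchy-Schwarz against the constant 1\<close>
  have "(\<integral>\<^sup>+x. ennreal (sqrt (f x)) \<partial>M) ^ 2 \<le> (\<integral>\<^sup>+x. ennreal (sqrt (f x)) ^ 2 \<partial>M) * (\<integral>\<^sup>+x. 1 \<partial>M)"
    using Cauchy_Schwarz_nn_integral[of "\<lambda>x. ennreal (sqrt (f x))" M "\<lambda>_. 1"] by simp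
  also have "\<dots> \<le> ennreal K"
    using assms(3) by (simp add: sq emeasure_space_1)
  finally have sqrt_f: "(\<integral>\<^sup>+x. ennreal (sqrt (f x)) \<partial>M) \<le> ennreal (sqrt K)"
    by (rule ennreal_le_sqrt_of_power2_le) (rule assms(4))
  have "integral\<^sup>L M g = enn2real (\<integral>\<^sup>+x. ennreal (g x) \<partial>M)"
    using True assms(6) by (intro integral_eq_nn_integral) auto
  also have "\<dots> \<le> a * sqrt K"
  proof (rule enn2real_leI)
    have "(\<integral>\<^sup>+x. ennreal (g x) \<partial>M) \<le> (\<integral>\<^sup>+x. ennreal a * ennreal (sqrt (f x)) \<partial>M)"
      using assms(5,7) by (intro nn_integral_mono) (simp add: ennreal_leI flip: ennreal_mult')
    also have "\<dots> \<le> ennreal a * ennreal (sqrt K)"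
      by (simp add: nn_integral_cmult mult_left_mono sqrt_f)
    finally show "(\<integral>\<^sup>+x. ennreal (g x) \<partial>M) \<le> ennreal (a * sqrt K)"
      using assms(5) by (simp add: ennreal_mult')
  qed (use assms in simp)
  finally show ?thesis .
qed

lemma prob_le_imp_nonneg:
  assumes "\<And>j. measure_pmf.prob P (A j) \<le> p"
  shows "0 \<le> p"
  using assms[of undefined] measure_nonneg[of "measure_pmf P"] by (meson order.trans)

lemma norm_dmask_sq: "(norm (dmask x r))\<^sup>2 = (\<Sum>j\<in>UNIV. (x $ j)\<^sup>2 * of_bool (r j))"
  unfolding power2_norm_eq_inner inner_vec_def dmask_def
  by (intro sum.cong) (auto simp: power2_eq_square)

lemma nn_integral_norm_dmask_sq_le:
  fixes P :: "'r pmf" and m :: "'r \<Rightarrow> 'd::finite \<Rightarrow> bool" and x :: "real ^ 'd"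
  assumes "\<And>j. measure_pmf.prob P {r. m r j} \<le> p"
  shows "(\<integral>\<^sup>+r. ennreal ((norm (dmask x (m r)))\<^sup>2) \<partial>P) \<le> ennreal (p * (norm x)\<^sup>2)"
proof -
  have p: "0 \<le> p"
    by (rule prob_le_imp_nonneg) (rule assms)
  have "(\<integral>\<^sup>+r. ennreal ((norm (dmask x (m r)))\<^sup>2) \<partial>P)
      = (\<Sum>j\<in>UNIV. \<integral>\<^sup>+r. ennreal ((x $ j)\<^sup>2) * indicator {r. m r j} r \<partial>P)"
    unfolding norm_dmask_sq
    by (subst nn_integral_sum[symmetric]) (auto intro!: nn_integral_cong simp: indicator_def simp flip: sum_ennreal)
  also have "\<dots> = (\<Sum>j\<in>UNIV. ennreal ((x $ j)\<^sup>2) * ennreal (measure_pmf.prob P {r. m r j}))"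
    by (simp add: nn_integral_cmult measure_pmf.emeasure_eq_measure)
  also have "\<dots> \<le> (\<Sum>j\<in>UNIV. ennreal ((x $ j)\<^sup>2 * p))"
    using assms by (intro sum_mono) (simp add: ennreal_leI mult_left_mono flip: ennreal_mult)
  also have "\<dots> = ennreal (p * (norm x)\<^sup>2)"
    using p by (subst sum_ennreal) (simp_all add: norm_vec_def L2_set_def sum_nonneg sum_distrib_left mult.commute)
  finally show ?thesis .
qed

lemma nn_integral_sample_point_norm_dmask_sq_le:
  fixes D :: "(real ^ 'd::finite) measure" and P :: "'r pmf" and m :: "'r \<Rightarrow> 'd \<Rightarrow> bool"
    and B p :: real
  assumes "prob_space D" and [measurable_cong]: "sets D = sets borel"
    and "AE x in D. norm x \<le> B" "\<And>j. measure_pmf.prob P {r. m r j} \<le> p" "i < n"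
  defines "M \<equiv> PiM {..<n} (\<lambda>_. D) \<Otimes>\<^sub>M PiM {..<n} (\<lambda>_. measure_pmf P)"
  shows "(\<lambda>q. (norm (dmask (fst q i) (m (snd q i))))\<^sup>2) \<in> borel_measurable M"
    and "(\<integral>\<^sup>+q. ennreal ((norm (dmask (fst q i) (m (snd q i))))\<^sup>2) \<partial>M) \<le> ennreal (p * B\<^sup>2)"
proof -
  let ?Dn = "PiM {..<n} (\<lambda>_. D)" and ?Pn = "PiM {..<n} (\<lambda>_. measure_pmf P)"
  interpret Pn: prob_space ?Pn by (intro prob_space_PiM prob_space_measure_pmf)
  have [measurable]: "(\<lambda>x. x $ j) \<in> borel_measurable D" for j
    by measurable
  have [measurable]: "(\<lambda>q. fst q i) \<in> measurable M D"
    using assms(5) by (auto simp: M_def intro!: measurable_compose[OF measurable_fst measurable_component_singleton])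
  have "(\<lambda>q. snd q i) \<in> measurable M (measure_pmf P)"
    using assms(5) by (auto simp: M_def intro!: measurable_compose[OF measurable_snd measurable_component_singleton])
  then have [measurable]: "(\<lambda>q. of_bool (m (snd q i) j) :: real) \<in> borel_measurable M" for j
    by (rule measurable_compose) simp
  show meas: "(\<lambda>q. (norm (dmask (fst q i) (m (snd q i))))\<^sup>2) \<in> borel_measurable M"
    unfolding norm_dmask_sq by measurable
  have "(\<integral>\<^sup>+q. ennreal ((norm (dmask (fst q i) (m (snd q i))))\<^sup>2) \<partial>M)
      = (\<integral>\<^sup>+xs. \<integral>\<^sup>+rs. ennreal ((norm (dmask (xs i) (m (rs i))))\<^sup>2) \<partial>?Pn \<partial>?Dn)"
    using Pn.nn_integral_fst[of "\<lambda>q. ennreal ((norm (dmask (fst q i) (m (snd q i))))\<^sup>2)" ?Dn] meas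
    by (simp add: M_def)
  also have "\<dots> = (\<integral>\<^sup>+xs. \<integral>\<^sup>+r. ennreal ((norm (dmask (xs i) (m r)))\<^sup>2) \<partial>P \<partial>?Dn)"
    using assms(5) by (intro nn_integral_cong nn_integral_PiM_component) (auto simp: prob_space_measure_pmf)
  also have "\<dots> \<le> (\<integral>\<^sup>+xs. ennreal (p * (norm (xs i))\<^sup>2) \<partial>?Dn)"
    by (intro nn_integral_mono nn_integral_norm_dmask_sq_le assms(4))
  also have "\<dots> = (\<integral>\<^sup>+x. ennreal (p * (norm x)\<^sup>2) \<partial>D)"
    using assms(1,5) by (intro nn_integral_PiM_component) auto
  also have "\<dots> \<le> (\<integral>\<^sup>+x. ennreal (p * B\<^sup>2) \<partial>D)"
    using assms(3) prob_le_imp_nonneg[OF assms(4)]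
    by (intro nn_integral_mono_AE) (auto elim!: eventually_mono intro!: ennreal_leI mult_left_mono power_mono)
  also have "\<dots> = ennreal (p * B\<^sup>2)"
    using prob_space.emeasure_space_1[OF assms(1)] by simp
  finally show "(\<integral>\<^sup>+q. ennreal ((norm (dmask (fst q i) (m (snd q i))))\<^sup>2) \<partial>M) \<le> ennreal (p * B\<^sup>2)" .
qed

lemma nn_integral_sample_norm_dmask_sq_le:
  fixes D :: "(real ^ 'd::finite) measure" and P :: "'r pmf" and m :: "'r \<Rightarrow> 'd \<Rightarrow> bool"
    and n :: nat and B p :: real
  assumes "prob_space D" "sets D = sets borel"
    and "AE x in D. norm x \<le> B" "\<And>j. measure_pmf.prob P {r. m r j} \<le> p"
  defines "M \<equiv> PiM {..<n} (\<lambda>_. D) \<Otimes>\<^sub>M PiM {..<n} (\<lambda>_. measure_pmf P)"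
    and "f \<equiv> \<lambda>q. \<Sum>i<n. (norm (dmask (fst q i) (m (snd q i))))\<^sup>2"
  shows "f \<in> borel_measurable M" and "(\<integral>\<^sup>+q. ennreal (f q) \<partial>M) \<le> ennreal (real n * p * B\<^sup>2)"
proof -
  note point = nn_integral_sample_point_norm_dmask_sq_le[OF assms(1-4), where n = n, folded M_def]
  show "f \<in> borel_measurable M"
    unfolding f_def using point(1) by (intro borel_measurable_sum) auto
  have "(\<integral>\<^sup>+q. ennreal (f q) \<partial>M)
      = (\<Sum>i<n. \<integral>\<^sup>+q. ennreal ((norm (dmask (fst q i) (m (snd q i))))\<^sup>2) \<partial>M)"
    unfolding f_def using point(1) by (subst nn_integral_sum[symmetric]) (auto intro!: nn_integral_cong)
  also have "\<dots> \<le> (\<Sum>i<n. ennreal (p * B\<^sup>2))"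
    by (intro sum_mono point(2)) simp
  also have "\<dots> = ennreal (real n * p * B\<^sup>2)"
    using prob_le_imp_nonneg[OF assms(4)]
    by (simp add: ennreal_of_nat_eq_real_of_nat mult.assoc flip: ennreal_mult)
  finally show "(\<integral>\<^sup>+q. ennreal (f q) \<partial>M) \<le> ennreal (real n * p * B\<^sup>2)" .
qed

lemma rademacher_masked_linear_class_le:
  fixes D :: "(real ^ 'd::finite) measure" and P :: "'r pmf" and m :: "'r \<Rightarrow> 'd \<Rightarrow> bool"
  assumes "B1 > 0" "prob_space D" "sets D = sets borel"
    and "AE x in D. norm x \<le> B2" "\<And>j. measure_pmf.prob P {r. m r j} \<le> p"
  shows "rademacher n D (measure_pmf P) (linear_class B1 (\<lambda>x r. dmask x (m r))) \<le> B1 * B2 * sqrt (p / n)"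
proof -
  let ?M = "PiM {..<n} (\<lambda>_. D) \<Otimes>\<^sub>M PiM {..<n} (\<lambda>_. measure_pmf P)"
  define f where "f = (\<lambda>q. \<Sum>i<n. (norm (dmask (fst q i) (m (snd q i))))\<^sup>2)"
  have p: "0 \<le> p"
    by (rule prob_le_imp_nonneg) (rule assms(5))
  have B2: "0 \<le> B2"
    using prob_space.AE_const[OF assms(2)] assms(4) by (metis (mono_tags) eventually_mono norm_ge_zero order.trans)
  have "rademacher n D (measure_pmf P) (linear_class B1 (\<lambda>x r. dmask x (m r)))
      \<le> B1 / n * sqrt (real n * p * B2\<^sup>2)"
    unfolding rademacher_def
  proof (rule integral_le_sqrt_of_nn_integral_le)
    show "prob_space ?M"
      by (intro prob_space_pair prob_space_PiM prob_space_measure_pmf assms(2))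
    show "f \<in> borel_measurable ?M" "(\<integral>\<^sup>+q. ennreal (f q) \<partial>?M) \<le> ennreal (real n * p * B2\<^sup>2)"
      unfolding f_def by (rule nn_integral_sample_norm_dmask_sq_le[OF assms(2-5), where n = n])+
    show "0 \<le> emp_rademacher n (linear_class B1 (\<lambda>x r. dmask x (m r))) (fst q) (snd q)" for q
      by (rule emp_rademacher_linear_class_nonneg[OF assms(1)])
    show "emp_rademacher n (linear_class B1 (\<lambda>x r. dmask x (m r))) (fst q) (snd q) \<le> B1 / n * sqrt (f q)" for q
      unfolding f_def by (rule emp_rademacher_linear_class_le[OF assms(1)])
  qed (use assms(1) p in auto)
  also have "\<dots> = B1 * B2 * sqrt (p / n)"
    using B2 p by (cases "n = 0") (simp_all add: real_sqrt_mult real_sqrt_divide field_simps)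
  finally show ?thesis .
qed

lemma inner_dmask_left: "dmask w r \<bullet> x = w \<bullet> dmask x r"
  unfolding dmask_def inner_vec_def by (intro sum.cong) auto

lemma inner_dmask_dmask: "dmask w r \<bullet> dmask x s = w \<bullet> dmask x (\<lambda>j. r j \<and> s j)"
  unfolding dmask_def inner_vec_def by (intro sum.cong) auto

lemma classI_eq_linear_class: "classI B = linear_class B dmask"
  unfolding classI_def linear_class_def ..

lemma classII_eq_classI: "classII B = classI B"
  unfolding classI_def classII_def by (simp add: inner_dmask_left)

lemma classIII_eq_linear_class:
  "classIII B = linear_class B (\<lambda>x r. dmask x (\<lambda>j. fst r j \<and> snd r j))"
  unfolding classIII_def linear_class_def by (simp add: inner_dmask_dmask)

lemma prob_dropout_pmf_coord:
  assumes "0 \<le> \<rho>" "\<rho> \<le> 1"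
  shows "measure_pmf.prob (dropout_pmf \<rho> :: ('d::finite \<Rightarrow> bool) pmf) {r. r j} = \<rho>"
proof -
  have "measure_pmf.prob (dropout_pmf \<rho> :: ('d \<Rightarrow> bool) pmf) {r. r j}
      = measure_pmf.prob (map_pmf (\<lambda>r. r j) (dropout_pmf \<rho> :: ('d \<Rightarrow> bool) pmf)) {True}"
    by (simp add: vimage_def)
  also have "\<dots> = measure_pmf.prob (bernoulli_pmf \<rho>) {True}"
    unfolding dropout_pmf_def by (subst Pi_pmf_component) auto
  finally show ?thesis using assms by (simp add: measure_pmf_single)
qed

lemma prob_pair_dropout_pmf_coord:
  assumes "0 \<le> \<rho>" "\<rho> \<le> 1"
  shows "measure_pmf.prob (pair_pmf (dropout_pmf \<rho>) (dropout_pmf \<rho>) :: (('d::finite \<Rightarrow> bool) \<times> _) pmf)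
           {r. fst r j \<and> snd r j} = \<rho> * \<rho>"
proof -
  have "{r :: ('d \<Rightarrow> bool) \<times> ('d \<Rightarrow> bool). fst r j \<and> snd r j} = {r. r j} \<times> {r. r j}"
    by auto
  then show ?thesis
    using assms by (simp add: measure_pmf_prob_product countable_finite prob_dropout_pmf_coord)
qed

theorem theorem2:
  fixes B1 B2 \<rho> :: real and n :: nat and D :: "(real ^ 'd) measure"
  assumes "B1 > 0" and "B2 > 0"
    and "0 \<le> \<rho>" and "\<rho> \<le> 1"
    and "prob_space D" and "sets D = sets borel"
    and "AE x in D. norm x \<le> B2"
  shows "rademacher n D (measure_pmf (dropout_pmf \<rho>)) (classI B1)
           = rademacher n D (measure_pmf (dropout_pmf \<rho>)) (classII B1)
       \<and> rademacher n D (measure_pmf (dropout_pmf \<rho>)) (classI B1) \<le> B1 * B2 * sqrt (\<rho> / real n)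
       \<and> rademacher n D (measure_pmf (pair_pmf (dropout_pmf \<rho>) (dropout_pmf \<rho>))) (classIII B1)
           \<le> B1 * B2 * \<rho> / sqrt (real n)"
proof (intro conjI)
  note sample = assms(1,5,6,7)
  show "rademacher n D (measure_pmf (dropout_pmf \<rho>)) (classI B1)
      = rademacher n D (measure_pmf (dropout_pmf \<rho>)) (classII B1)"
    by (simp add: classII_eq_classI)
  show "rademacher n D (measure_pmf (dropout_pmf \<rho>)) (classI B1) \<le> B1 * B2 * sqrt (\<rho> / real n)"
    using rademacher_masked_linear_class_le[OF sample, of "dropout_pmf \<rho>" "\<lambda>r. r" \<rho>]
    by (simp add: classI_eq_linear_class prob_dropout_pmf_coord assms(3,4))
  have "rademacher n D (measure_pmf (pair_pmf (dropout_pmf \<rho>) (dropout_pmf \<rho>))) (classIII B1)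
      \<le> B1 * B2 * sqrt (\<rho> * \<rho> / real n)"
    unfolding classIII_eq_linear_class
    by (rule rademacher_masked_linear_class_le[OF sample])
      (simp add: prob_pair_dropout_pmf_coord assms(3,4))
  also have "\<dots> = B1 * B2 * \<rho> / sqrt (real n)"
    using assms(3) by (simp add: real_sqrt_divide)
  finally show "rademacher n D (measure_pmf (pair_pmf (dropout_pmf \<rho>) (dropout_pmf \<rho>))) (classIII B1)
      \<le> B1 * B2 * \<rho> / sqrt (real n)" .
qed

end
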